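(* Let $A\subset\mathcal{N}=\omega^\omega$, let $\mathcal{F}$ be a hereditary family of closed and discrete subsets of $A$, let $\{T_a : a\in A\}$ be an $(A,\mathcal{F})$-Reznichenko family of trees, $\mathcal{T}=\bigcup_{a\in A}T_a$, and let $R[\mathcal{F}]\subset 2^{\mathcal{T}}$ be the associated compact set. Then there exists a determining function (for $R[\mathcal{F}]\subset\mathbb{R}^{\mathcal{T}}$) $f:\mathcal{T}\to wf(A)\times\omega^{(\omega^{<\omega})}$.
   Context: A tree is a partially ordered set $(T,\leq)$ in which for each $t$ the set $\{s: s<t\}$ is well ordered and which has a minimum, the root. An immediate successor of $t$ is a node $s>t$ with no $r$ satisfying $t<r<s$. The $\alpha$-th level consists of the $t$ with $\{s:s<t\}$ of order type $\alpha$; the height is the least $\alpha$ with empty $\alpha$-th level. A segment is a set $S\subset T$ of pairwise comparable elements such that $t\leq r\leq s$ with $t,s\in S$ implies $r\in S$; it is initial if it contains the root. For a set $A$ with $|A|\leq\mathfrak{c}$ and a hereditary family $\mathcal{F}$ of subsets of $A$ (closed under subsets), an $(A,\mathcal{F})$-Reznichenko family of trees is a family $\{T_a:a\in A\}$ of trees such that: (1) each $T_a$ has height $\omega$ and every node has $\mathfrak{c}$ many immediate successors; (2) $T_a\cap A=\{a\}$ and $a$ is the root of $T_a$; (3) for every $t\in\bigcup_a T_a$, $\{a\in A: t\in T_a\}\in\mathcal{F}$; (4) for $a\neq b$ and segments $S\subset T_a$, $S'\subset T_b$, $|S\cap S'|\leq 1$; (5) for every $B\in\mathcal{F}$ and every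 disjoint family $\{S_b:b\in B\}$ with $S_b$ a finite initial segment of $T_b$, there are $\mathfrak{c}$ many $t$ that are simultaneously an immediate successor of $S_b$ in $T_b$ for all $b\in B$. $R[\mathcal{F}]\subset 2^{\mathcal{T}}$ is the family of all segments of all the trees $T_a$ (a compact set). A tree on $\omega$ is a set $T\subset\omega^{<\omega}$ closed under initial segments; $Tr\subset 2^{\omega^{<\omega}}$ is the compact metrizable space of all trees on $\omega$; a branch of $T$ is $a\in\omega^\omega$ with $a|n\in T$ for all $n$; $wf(A)\subset Tr$ is the set of trees on $\omega$ none of whose branches belongs to $A$ (with subspace topology), and $\omega^{(\omega^{<\omega})}$ carries the product topology. For an index set $\Gamma$, a compact $K\subset\mathbb{R}^\Gamma$ and a separable metrizable $D$, $f:\Gamma\to D$ is a determining function if for all $x\in K$, compact $C\subset D$ and $\varepsilon>0$, the set $\{\gamma\in f^{-1}(C): |x_\gamma|>\varepsilon\}$ is finite. *)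

theory Defs
  imports "HOL-Analysis.Analysis" "HOL-Library.Equipollence"
begin

definition strictly_below :: "('n \<Rightarrow> 'n \<Rightarrow> bool) \<Rightarrow> 'n \<Rightarrow> 'n \<Rightarrow> bool" where
  "strictly_below le s t \<longleftrightarrow> le s t \<and> s \<noteq> t"

definition preds :: "'n set \<Rightarrow> ('n \<Rightarrow> 'n \<Rightarrow> bool) \<Rightarrow> 'n \<Rightarrow> 'n set" where
  "preds T le t = {s \<in> T. strictly_below le s t}"

definition well_ordered_by :: "('n \<Rightarrow> 'n \<Rightarrow> bool) \<Rightarrow> 'n set \<Rightarrow> bool" where
  "well_ordered_by le P \<longleftrightarrow>
     (\<forall>x\<in>P. \<forall>y\<in>P. le x y \<or> le y x) \<and>
     (\<forall>Q. Q \<subseteq> P \<and> Q \<noteq> {} \<longrightarrow> (\<exists>m\<in>Q. \<forall>q\<in>Q. le m q))"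

definition is_root :: "'n set \<Rightarrow> ('n \<Rightarrow> 'n \<Rightarrow> bool) \<Rightarrow> 'n \<Rightarrow> bool" where
  "is_root T le r \<longleftrightarrow> r \<in> T \<and> (\<forall>t\<in>T. le r t)"

definition is_tree :: "'n set \<Rightarrow> ('n \<Rightarrow> 'n \<Rightarrow> bool) \<Rightarrow> bool" where
  "is_tree T le \<longleftrightarrow>
     (\<forall>t\<in>T. le t t) \<and>
     (\<forall>s\<in>T. \<forall>t\<in>T. le s t \<and> le t s \<longrightarrow> s = t) \<and>
     (\<forall>r\<in>T. \<forall>s\<in>T. \<forall>t\<in>T. le r s \<and> le s t \<longrightarrow> le r t) \<and>
     (\<exists>r. is_root T le r) \<and>
     (\<forall>t\<in>T. well_ordered_by le (preds T le t))"

text \<open>Height exactly omega: every node lies on a finite level (finitely many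
predecessors, so level omega is empty) and every finite level n is nonempty.\<close>

definition height_omega :: "'n set \<Rightarrow> ('n \<Rightarrow> 'n \<Rightarrow> bool) \<Rightarrow> bool" where
  "height_omega T le \<longleftrightarrow>
     (\<forall>t\<in>T. finite (preds T le t)) \<and>
     (\<forall>n::nat. \<exists>t\<in>T. card (preds T le t) = n)"

definition imm_succ :: "'n set \<Rightarrow> ('n \<Rightarrow> 'n \<Rightarrow> bool) \<Rightarrow> 'n \<Rightarrow> 'n \<Rightarrow> bool" where
  "imm_succ T le t s \<longleftrightarrow> s \<in> T \<and> t \<in> T \<and> strictly_below le t s \<and>
     \<not> (\<exists>r\<in>T. strictly_below le t r \<and> strictly_below le r s)"

definition segment :: "'n set \<Rightarrow> ('n \<Rightarrow> 'n \<Rightarrow> bool) \<Rightarrow> 'n set \<Rightarrow> bool" where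
  "segment T le S \<longleftrightarrow> S \<subseteq> T \<and>
     (\<forall>x\<in>S. \<forall>y\<in>S. le x y \<or> le y x) \<and>
     (\<forall>t\<in>S. \<forall>s\<in>S. \<forall>r\<in>T. le t r \<and> le r s \<longrightarrow> r \<in> S)"

definition initial_segment :: "'n set \<Rightarrow> ('n \<Rightarrow> 'n \<Rightarrow> bool) \<Rightarrow> 'n set \<Rightarrow> bool" where
  "initial_segment T le S \<longleftrightarrow> segment T le S \<and> (\<exists>r\<in>S. is_root T le r)"

definition imm_succ_seg :: "'n set \<Rightarrow> ('n \<Rightarrow> 'n \<Rightarrow> bool) \<Rightarrow> 'n set \<Rightarrow> 'n \<Rightarrow> bool" where
  "imm_succ_seg T le S t \<longleftrightarrow> (\<exists>m\<in>S. (\<forall>s\<in>S. le s m) \<and> imm_succ T le m t)"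

text \<open>The set A is a subset of the Baire space (nat \<Rightarrow> nat); the nodes of the trees
have an arbitrary type 'n and A is identified with a subset of the nodes via an
injection emb.\<close>

definition hereditary :: "'a set set \<Rightarrow> bool" where
  "hereditary F \<longleftrightarrow> (\<forall>B\<in>F. \<forall>C. C \<subseteq> B \<longrightarrow> C \<in> F)"

definition reznichenko_family ::
  "(nat \<Rightarrow> nat) set \<Rightarrow> (nat \<Rightarrow> nat) set set \<Rightarrow> ((nat \<Rightarrow> nat) \<Rightarrow> 'n)
   \<Rightarrow> ((nat \<Rightarrow> nat) \<Rightarrow> 'n set) \<Rightarrow> ((nat \<Rightarrow> nat) \<Rightarrow> 'n \<Rightarrow> 'n \<Rightarrow> bool) \<Rightarrow> bool" where
  "reznichenko_family A F emb T le \<longleftrightarrow>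
     \<comment> \<open>(1)\<close>
     (\<forall>a\<in>A. is_tree (T a) (le a) \<and> height_omega (T a) (le a) \<and>
        (\<forall>t\<in>T a. {s. imm_succ (T a) (le a) t s} \<approx> (UNIV :: real set))) \<and>
     \<comment> \<open>(2)\<close>
     (\<forall>a\<in>A. T a \<inter> emb ` A = {emb a} \<and> is_root (T a) (le a) (emb a)) \<and>
     \<comment> \<open>(3)\<close>
     (\<forall>t\<in>(\<Union>a\<in>A. T a). {a\<in>A. t \<in> T a} \<in> F) \<and>
     \<comment> \<open>(4)\<close>
     (\<forall>a\<in>A. \<forall>b\<in>A. a \<noteq> b \<longrightarrow> (\<forall>S S'. segment (T a) (le a) S \<and> segment (T b) (le b) S' \<longrightarrow>
        (\<forall>x\<in>S \<inter> S'. \<forall>y\<in>S \<inter> S'. x = y))) \<and>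
     \<comment> \<open>(5)\<close>
     (\<forall>B\<in>F. \<forall>S :: (nat \<Rightarrow> nat) \<Rightarrow> 'n set.
        (\<forall>b\<in>B. finite (S b) \<and> initial_segment (T b) (le b) (S b)) \<and>
        (\<forall>b\<in>B. \<forall>b'\<in>B. b \<noteq> b' \<longrightarrow> S b \<inter> S b' = {}) \<longrightarrow>
        {t\<in>(\<Union>a\<in>A. T a). \<forall>b\<in>B. imm_succ_seg (T b) (le b) (S b) t} \<approx> (UNIV :: real set))"

definition R_F :: "(nat \<Rightarrow> nat) set \<Rightarrow> ((nat \<Rightarrow> nat) \<Rightarrow> 'n set) \<Rightarrow> ((nat \<Rightarrow> nat) \<Rightarrow> 'n \<Rightarrow> 'n \<Rightarrow> bool) \<Rightarrow> 'n set set" where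
  "R_F A T le = {S. \<exists>a\<in>A. segment (T a) (le a) S}"

definition baire_top :: "(nat \<Rightarrow> nat) topology" where
  "baire_top = product_topology (\<lambda>_. discrete_topology (UNIV :: nat set)) UNIV"

definition closed_discrete_in :: "(nat \<Rightarrow> nat) set \<Rightarrow> (nat \<Rightarrow> nat) set \<Rightarrow> bool" where
  "closed_discrete_in A B \<longleftrightarrow> B \<subseteq> A \<and> closedin (subtopology baire_top A) B \<and>
     (\<forall>x\<in>B. \<exists>U. openin baire_top U \<and> U \<inter> B = {x})"

text \<open>A tree on omega is represented by its characteristic function
nat list \<Rightarrow> bool (an element of 2^(omega^{<omega})).\<close>

definition tree_on_omega :: "(nat list \<Rightarrow> bool) \<Rightarrow> bool" where
  "tree_on_omega T \<longleftrightarrow> (\<forall>s t. T (s @ t) \<longrightarrow> T s)"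

definition branch_of :: "(nat list \<Rightarrow> bool) \<Rightarrow> (nat \<Rightarrow> nat) \<Rightarrow> bool" where
  "branch_of T a \<longleftrightarrow> (\<forall>n. T (map a [0..<n]))"

definition wf_set :: "(nat \<Rightarrow> nat) set \<Rightarrow> (nat list \<Rightarrow> bool) set" where
  "wf_set A = {T. tree_on_omega T \<and> (\<forall>a\<in>A. \<not> branch_of T a)}"

definition cantor_top :: "(nat list \<Rightarrow> bool) topology" where
  "cantor_top = product_topology (\<lambda>_. discrete_topology (UNIV :: bool set)) UNIV"

definition omega_pow_top :: "(nat list \<Rightarrow> nat) topology" where
  "omega_pow_top = product_topology (\<lambda>_. discrete_topology (UNIV :: nat set)) UNIV"

definition D_top :: "(nat \<Rightarrow> nat) set \<Rightarrow> ((nat list \<Rightarrow> bool) \<times> (nat list \<Rightarrow> nat)) topology" where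
  "D_top A = prod_topology (subtopology cantor_top (wf_set A)) omega_pow_top"

definition determining_function ::
  "'g set \<Rightarrow> ('g \<Rightarrow> real) set \<Rightarrow> 'd topology \<Rightarrow> ('g \<Rightarrow> 'd) \<Rightarrow> bool" where
  "determining_function \<Gamma> K D f \<longleftrightarrow>
     f ` \<Gamma> \<subseteq> topspace D \<and>
     (\<forall>x\<in>K. \<forall>C. compactin D C \<longrightarrow> (\<forall>\<epsilon>>0. finite {\<gamma>\<in>\<Gamma>. f \<gamma> \<in> C \<and> \<bar>x \<gamma>\<bar> > \<epsilon>}))"

end

theory Submission
  imports Defs
begin

text \<open>For a node t let B(t) be the set of a \<in> A with t \<in> T a; by (3) it is closed and
discrete in A. The first coordinate of f(t) is the tree of finite sequences that are
initial segments of two distinct members of B(t); it has no branch in A because B(t) has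
no accumulation point in A. The second coordinate assigns to a sequence that is an
initial segment of exactly one b \<in> B(t) the depth of t in T b. A compact set C \<subseteq> D and a
point a \<in> A give a level N such that every element of C leaves the branch a with a label
at most N before level N; hence f(t) \<in> C forces t to have depth at most N in T a, and a
segment of T a contains only finitely many such nodes.\<close>

definition seq_prefix :: "nat list \<Rightarrow> (nat \<Rightarrow> nat) \<Rightarrow> bool" where
  "seq_prefix s b \<longleftrightarrow> map b [0..<length s] = s"

lemma seq_prefix_map_iff: "seq_prefix (map a [0..<n]) b \<longleftrightarrow> (\<forall>i<n. b i = a i)"
  unfolding seq_prefix_def by (simp add: atLeast0LessThan lessThan_def)

lemma seq_prefix_appendD:
  assumes "seq_prefix (s @ t) b"
  shows "seq_prefix s b"
proof -
  have "map b [0..<length s + length t] = s @ t"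
    using assms by (simp add: seq_prefix_def)
  then have "take (length s) (map b [0..<length s + length t]) = s"
    by simp
  then show ?thesis
    by (simp add: seq_prefix_def take_map)
qed

lemma openin_baire_top_cylinder:
  assumes "openin baire_top U" "x \<in> U"
  obtains n where "\<And>y. (\<forall>i<n. y i = x i) \<Longrightarrow> y \<in> U"
proof -
  obtain V where fin: "finite {i. V i \<noteq> UNIV}" and xV: "x \<in> Pi\<^sub>E UNIV V"
    and sub: "Pi\<^sub>E UNIV V \<subseteq> U"
    using assms unfolding baire_top_def openin_product_topology_alt by fastforce
  obtain n where n: "{i. V i \<noteq> UNIV} \<subseteq> {..<n}"
    using finite_nat_bounded[OF fin] by blast
  have "y \<in> U" if "\<forall>i<n. y i = x i" for y
  proof -
    have "y i \<in> V i" for i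
      using that xV n by (cases "V i = UNIV") (auto simp: PiE_def Pi_def)
    then show ?thesis using sub by auto
  qed
  then show thesis using that by blast
qed

definition splitting_tree :: "(nat \<Rightarrow> nat) set \<Rightarrow> nat list \<Rightarrow> bool" where
  "splitting_tree B s \<longleftrightarrow> (\<exists>b1\<in>B. \<exists>b2\<in>B. b1 \<noteq> b2 \<and> seq_prefix s b1 \<and> seq_prefix s b2)"

lemma tree_on_omega_splitting_tree: "tree_on_omega (splitting_tree B)"
  unfolding tree_on_omega_def splitting_tree_def using seq_prefix_appendD by blast

lemma branch_of_splitting_tree_accumulates:
  assumes "branch_of (splitting_tree B) x" "openin baire_top U" "x \<in> U"
  obtains b1 b2 where "b1 \<in> B \<inter> U" "b2 \<in> B \<inter> U" "b1 \<noteq> b2"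
proof -
  obtain n where n: "\<And>y. (\<forall>i<n. y i = x i) \<Longrightarrow> y \<in> U"
    using openin_baire_top_cylinder[OF assms(2,3)] by blast
  have "splitting_tree B (map x [0..<n])"
    using assms(1) by (simp add: branch_of_def)
  then obtain b1 b2 where "b1 \<in> B" "b2 \<in> B" "b1 \<noteq> b2"
    "\<forall>i<n. b1 i = x i" "\<forall>i<n. b2 i = x i"
    unfolding splitting_tree_def seq_prefix_map_iff by blast
  then show thesis using that n by blast
qed

lemma splitting_tree_in_wf_set:
  assumes "closed_discrete_in A B"
  shows "splitting_tree B \<in> wf_set A"
proof -
  have "\<not> branch_of (splitting_tree B) x" if "x \<in> A" for x
  proof
    assume br: "branch_of (splitting_tree B) x"
    show False
    proof (cases "x \<in> B")
      case True
      then obtain U where "openin baire_top U" "U \<inter> B = {x}"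
        using assms unfolding closed_discrete_in_def by blast
      moreover from this obtain b1 b2 where "b1 \<in> B \<inter> U" "b2 \<in> B \<inter> U" "b1 \<noteq> b2"
        using branch_of_splitting_tree_accumulates[OF br] True by blast
      ultimately show False by (metis Int_commute singletonD)
    next
      case False
      have BA: "B \<subseteq> A" and "closedin (subtopology baire_top A) B"
        using assms by (auto simp: closed_discrete_in_def)
      then have "openin (subtopology baire_top A) (A - B)"
        by (simp add: closedin_def baire_top_def)
      then obtain V where V: "openin baire_top V" "A - B = V \<inter> A"
        by (auto simp: openin_subtopology)
      then have "x \<in> V"
        using \<open>x \<in> A\<close> False by blast
      then obtain b where "b \<in> B \<inter> V"
        using branch_of_splitting_tree_accumulates[OF br V(1)] by blast
      then show False
        using V(2) BA by blast
    qed
  qed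
  then show ?thesis
    using tree_on_omega_splitting_tree by (simp add: wf_set_def)
qed

lemma compactin_cantor_exit_bound:
  assumes K: "compactin cantor_top K" and nb: "\<forall>W\<in>K. \<not> branch_of W a"
  obtains N where "\<forall>W\<in>K. \<exists>n\<le>N. \<not> W (map a [0..<n])"
proof -
  define U where "U n = {W :: nat list \<Rightarrow> bool. \<not> W (map a [0..<n])}" for n
  have "openin cantor_top (U n)" for n
  proof -
    have "openin cantor_top {W \<in> topspace cantor_top. W (map a [0..<n]) \<in> {False}}"
      unfolding cantor_top_def
      by (rule openin_continuous_map_preimage[OF continuous_map_product_projection]) auto
    then show ?thesis by (simp add: cantor_top_def U_def)
  qed
  moreover have "K \<subseteq> \<Union>(range U)"
    using nb by (auto simp: branch_of_def U_def)
  ultimately obtain G where G: "finite G" "G \<subseteq> range U" "K \<subseteq> \<Union>G"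
    using K unfolding compactin_def by (metis (no_types, lifting) imageE)
  then obtain I where I: "finite I" "G = U ` I"
    by (meson finite_subset_image)
  have "\<exists>n\<le>Max (insert 0 I). \<not> W (map a [0..<n])" if W: "W \<in> K" for W
  proof -
    obtain i where "i \<in> I" "W \<in> U i"
      using W G(3) I(2) by blast
    moreover have "i \<le> Max (insert 0 I)"
      using \<open>i \<in> I\<close> I(1) by simp
    ultimately show ?thesis by (auto simp: U_def)
  qed
  then show thesis using that by blast
qed

lemma finite_coordinate_image_compactin_omega_pow:
  assumes "compactin omega_pow_top K"
  shows "finite ((\<lambda>g. g s) ` K)"
proof -
  have "continuous_map omega_pow_top (discrete_topology UNIV) (\<lambda>g. g s)"
    unfolding omega_pow_top_def by (rule continuous_map_product_projection) simp
  then show ?thesis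
    using image_compactin[OF assms] compactin_discrete_topology by blast
qed

lemma compactin_D_top_exit_bound:
  assumes C: "compactin (D_top A) C" and "a \<in> A"
  obtains N where "\<forall>p\<in>C. \<exists>n\<le>N. \<not> fst p (map a [0..<n]) \<and> snd p (map a [0..<n]) \<le> N"
proof -
  have "compactin (subtopology cantor_top (wf_set A)) (fst ` C)"
    using image_compactin[OF C] continuous_map_fst unfolding D_top_def by blast
  then have "compactin cantor_top (fst ` C)" "\<forall>W\<in>fst ` C. \<not> branch_of W a"
    using \<open>a \<in> A\<close> by (auto simp: compactin_subtopology wf_set_def)
  then obtain N1 where "\<forall>W\<in>fst ` C. \<exists>n\<le>N1. \<not> W (map a [0..<n])"
    by (rule compactin_cantor_exit_bound)
  then have N1: "\<forall>p\<in>C. \<exists>n\<le>N1. \<not> fst p (map a [0..<n])"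
    by blast
  have "compactin omega_pow_top (snd ` C)"
    using image_compactin[OF C] continuous_map_snd unfolding D_top_def by blast
  then have fin: "finite (\<Union>n\<le>N1. (\<lambda>g. g (map a [0..<n])) ` snd ` C)"
    by (intro finite_UN_I finite_atMost finite_coordinate_image_compactin_omega_pow)
  define N where "N = max N1 (Max (insert 0 (\<Union>n\<le>N1. (\<lambda>g. g (map a [0..<n])) ` snd ` C)))"
  have "\<exists>n\<le>N. \<not> fst p (map a [0..<n]) \<and> snd p (map a [0..<n]) \<le> N" if "p \<in> C" for p
  proof -
    obtain n where n: "n \<le> N1" "\<not> fst p (map a [0..<n])" using N1 \<open>p \<in> C\<close> by blast
    moreover have "snd p (map a [0..<n]) \<le> N"
      unfolding N_def using fin \<open>p \<in> C\<close> n(1) by (intro max.coboundedI2 Max_ge) auto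
    moreover have "n \<le> N"
      using n(1) by (simp add: N_def)
    ultimately show ?thesis by blast
  qed
  then show thesis using that by blast
qed

definition tree_depth :: "'n set \<Rightarrow> ('n \<Rightarrow> 'n \<Rightarrow> bool) \<Rightarrow> 'n \<Rightarrow> nat" where
  "tree_depth T le t = card (preds T le t)"

lemma tree_depth_strict_mono:
  assumes tr: "is_tree T le" and fin: "finite (preds T le y)"
    and "x \<in> T" "y \<in> T" "le x y" "x \<noteq> y"
  shows "tree_depth T le x < tree_depth T le y"
proof -
  have "preds T le x \<subseteq> preds T le y"
    using tr assms(3-6) unfolding is_tree_def preds_def strictly_below_def by blast
  moreover have "x \<in> preds T le y" "x \<notin> preds T le x"
    using assms(3-6) by (auto simp: preds_def strictly_below_def)
  ultimately have "preds T le x \<subset> preds T le y"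
    by blast
  then show ?thesis
    unfolding tree_depth_def using fin by (simp add: psubset_card_mono)
qed

lemma inj_on_tree_depth_segment:
  assumes tr: "is_tree T le" and ho: "height_omega T le" and sg: "segment T le S"
  shows "inj_on (tree_depth T le) S"
proof (rule inj_onI, rule ccontr)
  fix x y assume xy: "x \<in> S" "y \<in> S" "tree_depth T le x = tree_depth T le y" "x \<noteq> y"
  have "x \<in> T" "y \<in> T" "le x y \<or> le y x"
    using sg xy(1,2) unfolding segment_def by blast+
  then show False
    using xy tree_depth_strict_mono[OF tr] ho unfolding height_omega_def
    by (metis less_irrefl)
qed

lemma finite_segment_bounded_depth:
  assumes "is_tree T le" "height_omega T le" "segment T le S"
  shows "finite {t\<in>S. tree_depth T le t \<le> N}"
proof (rule finite_imageD)
  show "finite (tree_depth T le ` {t\<in>S. tree_depth T le t \<le> N})"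
    by (rule finite_subset[of _ "{..N}"]) auto
  show "inj_on (tree_depth T le) {t\<in>S. tree_depth T le t \<le> N}"
    using inj_on_tree_depth_segment[OF assms] by (rule inj_on_subset) auto
qed

definition trees_through :: "(nat \<Rightarrow> nat) set \<Rightarrow> ((nat \<Rightarrow> nat) \<Rightarrow> 'n set) \<Rightarrow> 'n \<Rightarrow> (nat \<Rightarrow> nat) set" where
  "trees_through A T t = {a\<in>A. t \<in> T a}"

text \<open>The value 0 off the sequences with a unique extension in B is arbitrary.\<close>

definition depth_code ::
  "(nat \<Rightarrow> nat) set \<Rightarrow> ((nat \<Rightarrow> nat) \<Rightarrow> 'n set) \<Rightarrow> ((nat \<Rightarrow> nat) \<Rightarrow> 'n \<Rightarrow> 'n \<Rightarrow> bool) \<Rightarrow> 'n \<Rightarrow> nat list \<Rightarrow> nat" where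
  "depth_code B T le t s =
     (if \<exists>!b. b \<in> B \<and> seq_prefix s b
      then let b = THE b. b \<in> B \<and> seq_prefix s b in tree_depth (T b) (le b) t
      else 0)"

lemma depth_code_eq_tree_depth:
  assumes "a \<in> B" "seq_prefix s a" "\<not> splitting_tree B s"
  shows "depth_code B T le t s = tree_depth (T a) (le a) t"
proof -
  have uniq: "b = a" if "b \<in> B" "seq_prefix s b" for b
    using assms that unfolding splitting_tree_def by metis
  have ex1: "\<exists>!b. b \<in> B \<and> seq_prefix s b"
    using assms(1,2) uniq by blast
  have "(THE b. b \<in> B \<and> seq_prefix s b) = a"
    using assms(1,2) by (intro the1_equality[OF ex1]) simp
  with ex1 show ?thesis
    by (simp add: depth_code_def)
qed

definition determining_map ::
  "(nat \<Rightarrow> nat) set \<Rightarrow> ((nat \<Rightarrow> nat) \<Rightarrow> 'n set) \<Rightarrow> ((nat \<Rightarrow> nat) \<Rightarrow> 'n \<Rightarrow> 'n \<Rightarrow> bool)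
   \<Rightarrow> 'n \<Rightarrow> (nat list \<Rightarrow> bool) \<times> (nat list \<Rightarrow> nat)" where
  "determining_map A T le t =
     (splitting_tree (trees_through A T t), depth_code (trees_through A T t) T le t)"

lemma determining_map_in_topspace:
  assumes "closed_discrete_in A (trees_through A T t)"
  shows "determining_map A T le t \<in> topspace (D_top A)"
proof -
  have "topspace (D_top A) = wf_set A \<times> UNIV"
    by (simp add: D_top_def cantor_top_def omega_pow_top_def)
  then show ?thesis
    using splitting_tree_in_wf_set[OF assms] by (simp add: determining_map_def)
qed

lemma tree_depth_bounded_on_compact_preimage:
  assumes "compactin (D_top A) C" "a \<in> A"
  obtains N where "\<And>t. t \<in> T a \<Longrightarrow> determining_map A T le t \<in> C \<Longrightarrow> tree_depth (T a) (le a) t \<le> N"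
proof -
  obtain N where N: "\<forall>p\<in>C. \<exists>n\<le>N. \<not> fst p (map a [0..<n]) \<and> snd p (map a [0..<n]) \<le> N"
    using compactin_D_top_exit_bound[OF assms] by blast
  have "tree_depth (T a) (le a) t \<le> N"
    if t: "t \<in> T a" and ft: "determining_map A T le t \<in> C" for t
  proof -
    obtain n where "\<not> fst (determining_map A T le t) (map a [0..<n])"
      "snd (determining_map A T le t) (map a [0..<n]) \<le> N"
      using N ft by blast
    then have n: "\<not> splitting_tree (trees_through A T t) (map a [0..<n])"
      "depth_code (trees_through A T t) T le t (map a [0..<n]) \<le> N"
      by (simp_all add: determining_map_def)
    have "a \<in> trees_through A T t" "seq_prefix (map a [0..<n]) a"
      using t \<open>a \<in> A\<close> by (simp_all add: trees_through_def seq_prefix_map_iff)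
    then have "depth_code (trees_through A T t) T le t (map a [0..<n]) = tree_depth (T a) (le a) t"
      using n(1) by (rule depth_code_eq_tree_depth)
    with n(2) show ?thesis
      by simp
  qed
  then show thesis using that by blast
qed

lemma reznichenko_family_tree:
  assumes "reznichenko_family A F emb T le" "a \<in> A"
  shows "is_tree (T a) (le a)" "height_omega (T a) (le a)"
  using conjunct1[OF assms(1)[unfolded reznichenko_family_def]] assms(2) by blast+

lemma reznichenko_family_trees_through:
  assumes "reznichenko_family A F emb T le" "a \<in> A" "t \<in> T a"
  shows "trees_through A T t \<in> F"
  using conjunct1[OF conjunct2[OF conjunct2[OF assms(1)[unfolded reznichenko_family_def]]]] assms(2,3)
  unfolding trees_through_def by blast

theorem theorem4p1:
  fixes A :: "(nat \<Rightarrow> nat) set"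
    and F :: "(nat \<Rightarrow> nat) set set"
    and emb :: "(nat \<Rightarrow> nat) \<Rightarrow> 'n"
    and T :: "(nat \<Rightarrow> nat) \<Rightarrow> 'n set"
    and le :: "(nat \<Rightarrow> nat) \<Rightarrow> 'n \<Rightarrow> 'n \<Rightarrow> bool"
  assumes "inj_on emb A"
    and "hereditary F"
    and "\<forall>B\<in>F. closed_discrete_in A B"
    and "reznichenko_family A F emb T le"
  shows "\<exists>f. determining_function (\<Union>a\<in>A. T a)
              ((\<lambda>S. indicator S) ` R_F A T le) (D_top A) f"
proof -
  let ?f = "determining_map A T le"
  have "?f ` (\<Union>a\<in>A. T a) \<subseteq> topspace (D_top A)"
    using reznichenko_family_trees_through[OF assms(4)] assms(3)
    by (intro image_subsetI determining_map_in_topspace) blast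
  moreover have "finite {t \<in> \<Union>a\<in>A. T a. ?f t \<in> C \<and> \<bar>indicator S t\<bar> > \<epsilon>}"
    if C: "compactin (D_top A) C" and "\<epsilon> > 0" and S: "S \<in> R_F A T le" for C S and \<epsilon> :: real
  proof -
    obtain a where a: "a \<in> A" "segment (T a) (le a) S"
      using S unfolding R_F_def by blast
    obtain N where N: "\<And>t. t \<in> T a \<Longrightarrow> ?f t \<in> C \<Longrightarrow> tree_depth (T a) (le a) t \<le> N"
      using tree_depth_bounded_on_compact_preimage[OF C a(1)] by blast
    have "S \<subseteq> T a"
      using a(2) by (simp add: segment_def)
    then have "{t \<in> \<Union>a\<in>A. T a. ?f t \<in> C \<and> \<bar>indicator S t\<bar> > \<epsilon>} \<subseteq> {t\<in>S. tree_depth (T a) (le a) t \<le> N}"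
      using \<open>\<epsilon> > 0\<close> N by (auto simp: indicator_def split: if_splits)
    moreover have "finite {t\<in>S. tree_depth (T a) (le a) t \<le> N}"
      using reznichenko_family_tree[OF assms(4) a(1)] a(2) by (intro finite_segment_bounded_depth)
    ultimately show ?thesis
      by (rule finite_subset)
  qed
  ultimately have "determining_function (\<Union>a\<in>A. T a) ((\<lambda>S. indicator S) ` R_F A T le) (D_top A) ?f"
    unfolding determining_function_def by blast
  then show ?thesis by blast
qed

end
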